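(* Let $n\in\mathbb{N}$, $1<p,q<\infty$, $0<r<\infty$ with $p+q\geq r$, $\delta\in[0,1]\cap\left[\frac{r-q}{r},\frac{p}{r}\right]$, and $a,b,c\in\mathbb{R}$ with $\frac{\delta r}{p}+\frac{(1-\delta)r}{q}=1$ and $c=\delta(a-1)+b(1-\delta)$. Let $|x|$ denote the Euclidean norm on $\mathbb{R}^n$ and $\nabla$ the standard gradient. Then for all $f\in C_0^\infty(\mathbb{R}^n\setminus\{0\})$: if $n\neq p(1-a)$, $$\||x|^{c}f\|_{L^{r}(\mathbb{R}^n)}\leq\left|\frac{p}{n-p(1-a)}\right|^{\delta}\||x|^{a}\nabla f\|^{\delta}_{L^{p}(\mathbb{R}^n)}\||x|^{b}f\|^{1-\delta}_{L^{q}(\mathbb{R}^n)};$$ if $n=p(1-a)$, $$\||x|^{c}f\|_{L^{r}(\mathbb{R}^n)}\leq p^{\delta}\||x|^{a}\log|x|\,\nabla f\|^{\delta}_{L^{p}(\mathbb{R}^n)}\||x|^{b}f\|^{1-\delta}_{L^{q}(\mathbb{R}^n)}.$$ Here $\||x|^a\nabla f\|_{L^p}$ means $\left(\int_{\mathbb{R}^n}|x|^{ap}|\nabla f(x)|^p dx\right)^{1/p}$ with $|\nabla f|$ the Euclidean length. *)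

theory Defs
  imports "HOL-Analysis.Analysis"
begin

text \<open>Infinitely (Frechet) differentiable real-valued functions on a Euclidean space:
  f is differentiable everywhere and every partial derivative is again smooth
  (greatest fixed point, i.e. derivatives of all orders exist).\<close>
coinductive smooth_fun :: "('a::euclidean_space \<Rightarrow> real) \<Rightarrow> bool" where
  "\<lbrakk>\<forall>x. f differentiable (at x);
    \<forall>i\<in>Basis. smooth_fun (\<lambda>x. frechet_derivative f (at x) i)\<rbrakk> \<Longrightarrow> smooth_fun f"

definition C0_inf_punct :: "('a::euclidean_space \<Rightarrow> real) \<Rightarrow> bool" where
  "C0_inf_punct f \<longleftrightarrow> smooth_fun f \<and>
     (\<exists>K. compact K \<and> 0 \<notin> K \<and> (\<forall>x. x \<notin> K \<longrightarrow> f x = 0))"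

definition grad :: "('a::euclidean_space \<Rightarrow> real) \<Rightarrow> 'a \<Rightarrow> 'a" where
  "grad f x = (\<Sum>i\<in>Basis. frechet_derivative f (at x) i *\<^sub>R i)"

definition Lp_norm :: "real \<Rightarrow> ('a::euclidean_space \<Rightarrow> real) \<Rightarrow> real" where
  "Lp_norm p g = (\<integral>x. \<bar>g x\<bar> powr p \<partial>lborel) powr (1 / p)"

end

theory Submission
  imports Defs
begin

text \<open>
  The inequality is H\<ouml>lder interpolation between |x|^(a-1) f in L^p and |x|^b f in L^q,
  followed by a weighted Hardy inequality that bounds the first factor by |x|^a \<nabla>f.

  Hardy's inequality comes from the radial integration by parts identity
  \<integral> (\<nabla>g \<cdot> x) |x|^(-\<beta>) = (\<beta> - n) \<integral> g |x|^(-\<beta>), and in the critical case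
  \<integral> (\<nabla>g \<cdot> x) |x|^(-n) log |x| = - \<integral> g |x|^(-n), applied to g = |f|^p; H\<ouml>lder bounds the
  left-hand side by p \<parallel>|x|^(a-1) f\<parallel>_p^(p-1) \<parallel>|x|^a \<nabla>f\<parallel>_p.
  The identity needs no divergence theorem: substituting y = t x gives
  \<integral> g(t x) |x|^(-\<beta>) dx = t^(\<beta>-n) \<integral> g |x|^(-\<beta>), and differentiating at t = 1 under the
  integral sign produces the left-hand side.
\<close>

definition abs_powr_deriv :: "real \<Rightarrow> real \<Rightarrow> real" where
  "abs_powr_deriv p s = p * \<bar>s\<bar> powr (p - 1) * sgn s"

lemma abs_powr_deriv_0 [simp]: "abs_powr_deriv p 0 = 0"
  by (simp add: abs_powr_deriv_def)

lemma abs_abs_powr_deriv: "p \<ge> 0 \<Longrightarrow> \<bar>abs_powr_deriv p s\<bar> = p * \<bar>s\<bar> powr (p - 1)"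
  by (cases "s = 0") (auto simp: abs_powr_deriv_def abs_mult abs_sgn_eq)

lemma tendsto_abs_powr_0:
  assumes "p > 0"
  shows "((\<lambda>h::real. \<bar>h\<bar> powr p) \<longlongrightarrow> 0) (at 0)"
  by (rule tendsto_zero_powrI) (use assms in \<open>auto intro!: tendsto_eq_intros\<close>)

lemma has_real_derivative_abs_powr:
  assumes "p > 1"
  shows "((\<lambda>s. \<bar>s\<bar> powr p) has_real_derivative abs_powr_deriv p s) (at s)"
proof -
  consider "s = 0" | "s > 0" | "s < 0" by linarith
  then show ?thesis
  proof cases
    case 1
    have lim: "((\<lambda>h. \<bar>h\<bar> powr (p - 1)) \<longlongrightarrow> 0) (at (0::real))"
      using assms by (intro tendsto_abs_powr_0) simp
    have ev: "\<forall>\<^sub>F h in at (0::real). \<bar>h\<bar> powr (p - 1) = \<bar>(\<bar>0 + h\<bar> powr p - \<bar>0\<bar> powr p) / h\<bar>"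
      unfolding eventually_at_filter by (auto simp: powr_diff abs_divide)
    have "((\<lambda>h. (\<bar>0 + h\<bar> powr p - \<bar>0\<bar> powr p) / h) \<longlongrightarrow> 0) (at (0::real))"
      by (rule tendsto_rabs_zero_cancel) (use tendsto_cong[OF ev] lim in simp)
    then show ?thesis using 1 by (simp add: DERIV_def)
  next
    case 2
    have "((\<lambda>s. s powr p) has_real_derivative p * s powr (p - 1)) (at s)"
      using 2 by (rule has_real_derivative_powr)
    moreover have "\<forall>\<^sub>F x in nhds s. \<bar>x\<bar> powr p = x powr p"
      using eventually_nhds_in_open[of "{0<..}" s] 2 by (auto elim!: eventually_mono)
    ultimately show ?thesis using 2
      by (subst DERIV_cong_ev[OF refl _ refl]) (auto simp: abs_powr_deriv_def)
  next
    case 3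
    have "((\<lambda>x. (- x) powr p) has_real_derivative p * (- s) powr (p - of_nat 1) * (-1)) (at s)"
      by (rule DERIV_fun_powr) (use 3 in \<open>auto intro!: derivative_eq_intros\<close>)
    moreover have "\<forall>\<^sub>F x in nhds s. \<bar>x\<bar> powr p = (- x) powr p"
      using eventually_nhds_in_open[of "{..<0}" s] 3 by (auto elim!: eventually_mono)
    ultimately show ?thesis using 3
      by (subst DERIV_cong_ev[OF refl _ refl]) (auto simp: abs_powr_deriv_def)
  qed
qed

lemma continuous_on_abs_powr_deriv:
  assumes "p > 1"
  shows "continuous_on UNIV (abs_powr_deriv p)"
proof -
  have "isCont (abs_powr_deriv p) s" for s
  proof (cases "s = 0")
    case True
    have "((\<lambda>h. \<bar>h\<bar> powr (p - 1)) \<longlongrightarrow> 0) (at (0::real))"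
      using assms by (intro tendsto_abs_powr_0) simp
    then have "((\<lambda>h. p * \<bar>h\<bar> powr (p - 1)) \<longlongrightarrow> 0) (at (0::real))"
      by (rule tendsto_mult_right_zero)
    then have "((\<lambda>h. \<bar>abs_powr_deriv p h\<bar>) \<longlongrightarrow> 0) (at 0)"
      using assms by (simp add: abs_abs_powr_deriv)
    then have "(abs_powr_deriv p \<longlongrightarrow> 0) (at 0)"
      by (rule tendsto_rabs_zero_cancel)
    then show ?thesis using True by (simp add: isCont_def)
  next
    case False
    then show ?thesis unfolding abs_powr_deriv_def by (intro continuous_intros) auto
  qed
  then show ?thesis by (simp add: continuous_on_eq_continuous_at)
qed

lemma linear_eq_inner_sum_Basis:
  fixes L :: "'a::euclidean_space \<Rightarrow> real"
  assumes "linear L"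
  shows "L v = (\<Sum>i\<in>Basis. L i *\<^sub>R i) \<bullet> v"
proof -
  have "L v = L (\<Sum>i\<in>Basis. (v \<bullet> i) *\<^sub>R i)" by (simp add: euclidean_representation)
  also have "\<dots> = (\<Sum>i\<in>Basis. (v \<bullet> i) * L i)"
    using assms by (simp add: linear_sum linear_scale)
  also have "\<dots> = (\<Sum>i\<in>Basis. L i *\<^sub>R i) \<bullet> v"
    by (simp add: inner_sum_right inner_commute mult.commute)
  finally show ?thesis .
qed

lemma has_derivative_grad:
  assumes "f differentiable (at x)"
  shows "(f has_derivative (\<lambda>v. grad f x \<bullet> v)) (at x)"
proof -
  have df: "(f has_derivative frechet_derivative f (at x)) (at x)"
    using assms frechet_derivative_works by blast
  have "frechet_derivative f (at x) = (\<lambda>v. grad f x \<bullet> v)"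
    unfolding grad_def by (rule ext, rule linear_eq_inner_sum_Basis[OF has_derivative_linear[OF df]])
  with df show ?thesis by simp
qed

lemma grad_eqI:
  assumes "(f has_derivative (\<lambda>v. G \<bullet> v)) (at x)"
  shows "grad f x = G"
proof -
  have "frechet_derivative f (at x) = (\<lambda>v. G \<bullet> v)"
    using frechet_derivative_at[OF assms] by simp
  then show ?thesis unfolding grad_def by (simp add: euclidean_representation)
qed

lemma grad_comp:
  assumes "(\<phi> has_real_derivative D) (at (f x))" and "f differentiable (at x)"
  shows "grad (\<lambda>x. \<phi> (f x)) x = D *\<^sub>R grad f x"
proof (rule grad_eqI)
  have "((\<lambda>x. \<phi> (f x)) has_derivative (\<lambda>v. D * (grad f x \<bullet> v))) (at x)"
    using has_derivative_compose[OF has_derivative_grad[OF assms(2)] assms(1)[unfolded has_field_derivative_def]]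
    by simp
  then show "((\<lambda>x. \<phi> (f x)) has_derivative (\<lambda>v. (D *\<^sub>R grad f x) \<bullet> v)) (at x)"
    by simp
qed

definition C1c_punct :: "'a::euclidean_space set \<Rightarrow> ('a \<Rightarrow> real) \<Rightarrow> bool" where
  "C1c_punct K f \<longleftrightarrow> compact K \<and> 0 \<notin> K \<and> (\<forall>x. x \<notin> K \<longrightarrow> f x = 0) \<and>
     (\<forall>x. f differentiable (at x)) \<and> continuous_on UNIV (grad f)"

lemma C1c_punct_has_derivative:
  "C1c_punct K f \<Longrightarrow> (f has_derivative (\<lambda>v. grad f x \<bullet> v)) (at x)"
  by (simp add: C1c_punct_def has_derivative_grad)

lemma C1c_punct_continuous: "C1c_punct K f \<Longrightarrow> continuous_on UNIV f"
  by (simp add: C1c_punct_def continuous_on_eq_continuous_within differentiable_imp_continuous_within)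

lemma C1c_punct_grad_eq_0:
  assumes f: "C1c_punct K f" and x: "x \<notin> K"
  shows "grad f x = 0"
proof (rule grad_eqI)
  have K: "open (- K)" using f compact_imp_closed by (auto simp: C1c_punct_def)
  have "((\<lambda>_. 0) has_derivative (\<lambda>v. 0 \<bullet> v)) (at x)" by simp
  then show "(f has_derivative (\<lambda>v. 0 \<bullet> v)) (at x)"
    by (rule has_derivative_transform_within_open[OF _ K]) (use f x in \<open>auto simp: C1c_punct_def\<close>)
qed

lemma smooth_funD:
  "smooth_fun f \<Longrightarrow> (\<forall>x. f differentiable (at x)) \<and>
     (\<forall>i\<in>Basis. smooth_fun (\<lambda>x. frechet_derivative f (at x) i))"
  by (erule smooth_fun.cases) simp

lemma C0_inf_punct_imp_C1c_punct:
  assumes "C0_inf_punct f"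
  obtains K where "C1c_punct K f"
proof -
  from assms obtain K where K: "compact K" "0 \<notin> K" "\<And>x. x \<notin> K \<Longrightarrow> f x = 0"
    and "smooth_fun f" unfolding C0_inf_punct_def by blast
  then have diff: "\<forall>x. f differentiable (at x)"
    and partials: "\<forall>i\<in>Basis. smooth_fun (\<lambda>x. frechet_derivative f (at x) i)"
    using smooth_funD by blast+
  have "continuous_on UNIV (\<lambda>x. frechet_derivative f (at x) i)" if "i \<in> Basis" for i
  proof -
    have "\<forall>x. (\<lambda>x. frechet_derivative f (at x) i) differentiable (at x)"
      using smooth_funD partials that by blast
    then show ?thesis
      by (simp add: continuous_on_eq_continuous_at differentiable_imp_continuous_within)
  qed
  then have "continuous_on UNIV (grad f)"
    unfolding grad_def by (intro continuous_intros) auto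
  with K diff show ?thesis by (intro that) (auto simp: C1c_punct_def)
qed

lemma C1c_punct_comp:
  assumes f: "C1c_punct K f" and "\<phi> 0 = 0"
    and \<phi>: "\<And>s. (\<phi> has_real_derivative \<phi>' s) (at s)" and "continuous_on UNIV \<phi>'"
  shows "C1c_punct K (\<lambda>x. \<phi> (f x))"
    and "grad (\<lambda>x. \<phi> (f x)) x = \<phi>' (f x) *\<^sub>R grad f x"
proof -
  have diff: "f differentiable (at x)" for x using f by (simp add: C1c_punct_def)
  show grad: "grad (\<lambda>x. \<phi> (f x)) x = \<phi>' (f x) *\<^sub>R grad f x" for x
    by (rule grad_comp[OF \<phi> diff])
  have "(\<lambda>x. \<phi> (f x)) differentiable (at x)" for x
    using differentiable_chain_at[OF diff, of \<phi>] \<phi> real_differentiable_def by (auto simp: o_def)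
  moreover have "continuous_on UNIV (grad (\<lambda>x. \<phi> (f x)))"
  proof -
    have "continuous_on UNIV (\<lambda>x. \<phi>' (f x))"
      using continuous_on_compose2[OF assms(4) C1c_punct_continuous[OF f]] by simp
    then show ?thesis unfolding grad using f by (intro continuous_intros) (auto simp: C1c_punct_def)
  qed
  ultimately show "C1c_punct K (\<lambda>x. \<phi> (f x))"
    using f assms(2) by (auto simp: C1c_punct_def)
qed

lemma integrable_lborel_compact_support_punct:
  fixes h :: "'a::euclidean_space \<Rightarrow> real"
  assumes "compact K" "0 \<notin> K" "continuous_on (-{0}) h" "\<And>x. x \<notin> K \<Longrightarrow> h x = 0"
  shows "integrable lborel h"
proof -
  have "continuous_on K h" using assms(2) by (intro continuous_on_subset[OF assms(3)]) auto
  moreover have "h = (\<lambda>x. indicator K x *\<^sub>R h x)" using assms(4) by (auto simp: indicator_def fun_eq_iff)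
  ultimately show ?thesis using borel_integrable_compact[OF assms(1)] by metis
qed

lemma C1c_punct_integrable_weighted:
  assumes f: "C1c_punct K f" and W: "continuous_on (-{0}) W"
  shows "integrable lborel (\<lambda>x. f x * W x)"
proof (rule integrable_lborel_compact_support_punct)
  show "compact K" "0 \<notin> K" "\<And>x. x \<notin> K \<Longrightarrow> f x * W x = 0" using f by (auto simp: C1c_punct_def)
  show "continuous_on (-{0}) (\<lambda>x. f x * W x)"
    using C1c_punct_continuous[OF f] W by (intro continuous_intros) (auto intro: continuous_on_subset)
qed

section \<open>Dilations\<close>

lemma integral_dilation:
  fixes g :: "'a::euclidean_space \<Rightarrow> real"
  assumes "g integrable_on UNIV" "bounded S" "\<And>x. x \<notin> S \<Longrightarrow> g x = 0" "t > 0"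
  shows "integral UNIV (\<lambda>x. g (t *\<^sub>R x)) = integral UNIV g / t ^ DIM('a)"
proof -
  obtain a where S: "S \<subseteq> cbox (-a) a" using bounded_subset_cbox_symmetric[OF assms(2)] by blast
  have "(g has_integral integral UNIV g) (cbox (-a) a)"
  proof -
    have "(\<lambda>x. if x \<in> cbox (-a) a then g x else 0) = g" using S assms(3) by (force simp: fun_eq_iff)
    then show ?thesis
      using integrable_integral[OF assms(1)] has_integral_restrict_UNIV[of "cbox (-a) a" g] by simp
  qed
  from has_integral_affinity[OF this, of t 0]
  have "((\<lambda>x. g (t *\<^sub>R x)) has_integral integral UNIV g / t ^ DIM('a)) ((\<lambda>x. (1/t) *\<^sub>R x) ` cbox (-a) a)"
    using assms(4) by (simp add: divide_inverse mult.commute)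
  then have "((\<lambda>x. g (t *\<^sub>R x)) has_integral integral UNIV g / t ^ DIM('a)) UNIV"
  proof (rule has_integral_on_superset)
    fix x assume x: "x \<notin> (\<lambda>x. (1/t) *\<^sub>R x) ` cbox (-a) a"
    have "x = (1/t) *\<^sub>R (t *\<^sub>R x)" using assms(4) by simp
    then have "t *\<^sub>R x \<notin> S" using x S by blast
    then show "g (t *\<^sub>R x) = 0" using assms(3) by blast
  qed auto
  then show ?thesis by (rule integral_unique)
qed

lemma C1c_punct_integral_dilation:
  fixes f :: "'a::euclidean_space \<Rightarrow> real"
  assumes f: "C1c_punct K f" and W: "continuous_on (-{0}) W" and t: "t > 0"
  shows "integral UNIV (\<lambda>x. f (t *\<^sub>R x) * W x) = integral UNIV (\<lambda>y. f y * W (y /\<^sub>R t)) / t ^ DIM('a)"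
proof -
  have "continuous_on (-{0}) (\<lambda>y. W (y /\<^sub>R t))"
    using t by (intro continuous_on_compose2[OF W]) (auto intro!: continuous_intros)
  then have "(\<lambda>y. f y * W (y /\<^sub>R t)) integrable_on UNIV"
    by (rule integrable_on_lborel[OF C1c_punct_integrable_weighted[OF f]])
  from integral_dilation[OF this _ _ t, of K] f t show ?thesis
    by (auto simp: C1c_punct_def compact_imp_bounded)
qed

lemma continuous_cutoff_near_0:
  fixes W :: "'a::real_normed_vector \<Rightarrow> real"
  assumes W: "continuous_on (-{0}) W" and d: "d > 0"
  obtains V where "continuous_on UNIV V" "\<And>x. norm x \<ge> d \<Longrightarrow> V x = W x"
proof
  define V where "V x = W x * min 1 (max 0 (2 * norm x / d - 1))" for x
  have "isCont V x" for x
  proof (cases "x = 0")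
    case True
    have "\<forall>\<^sub>F y in at 0. V y = 0"
      unfolding eventually_at
      by (rule exI[of _ "d/2"]) (use d in \<open>auto simp: V_def dist_norm field_simps\<close>)
    then have "(V \<longlongrightarrow> 0) (at 0)" by (rule tendsto_eventually)
    then show ?thesis using True by (simp add: isCont_def V_def)
  next
    case False
    then have "isCont W x"
      using W continuous_on_eq_continuous_at[of "-{0}" W] by auto
    then show ?thesis unfolding V_def using d by (intro continuous_intros) auto
  qed
  then show "continuous_on UNIV V" by (simp add: continuous_on_eq_continuous_at)
  show "V x = W x" if "norm x \<ge> d" for x
    using that d by (simp add: V_def field_simps)
qed

lemma has_field_derivative_integral_cbox_dilation:
  fixes g V :: "'a::euclidean_space \<Rightarrow> real"
  assumes g: "\<And>x. (g has_derivative (\<lambda>v. grad g x \<bullet> v)) (at x)"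
    and cg: "continuous_on UNIV (grad g)" and cV: "continuous_on UNIV V"
  shows "((\<lambda>t. integral (cbox u w) (\<lambda>x. g (t *\<^sub>R x) * V x)) has_field_derivative
           integral (cbox u w) (\<lambda>x. (grad g (t *\<^sub>R x) \<bullet> x) * V x)) (at t)"
proof -
  have "continuous_on UNIV g"
    using g by (meson continuous_on_eq_continuous_within has_derivative_continuous)
  then have "continuous_on UNIV (\<lambda>x. g (s *\<^sub>R x))" for s
    by (rule continuous_on_compose2) (auto intro!: continuous_intros)
  then have "continuous_on UNIV (\<lambda>x. g (s *\<^sub>R x) * V x)" for s
    using cV by (intro continuous_intros)
  then have int: "(\<lambda>x. g (s *\<^sub>R x) * V x) integrable_on cbox u w" for s
    by (rule integrable_continuous[OF continuous_on_subset]) simp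
  have der: "((\<lambda>s. g (s *\<^sub>R x) * V x) has_field_derivative (grad g (s *\<^sub>R x) \<bullet> x) * V x) (at s within UNIV)"
    for s x
  proof -
    have "((\<lambda>s. g (s *\<^sub>R x)) has_derivative (\<lambda>h. grad g (s *\<^sub>R x) \<bullet> (h *\<^sub>R x))) (at s)"
      by (rule has_derivative_compose[OF _ g]) (auto intro!: derivative_eq_intros)
    then have "((\<lambda>s. g (s *\<^sub>R x)) has_field_derivative grad g (s *\<^sub>R x) \<bullet> x) (at s)"
      unfolding has_field_derivative_def by (simp add: mult.commute[of _ "grad g (s *\<^sub>R x) \<bullet> x"])
    then show ?thesis by (simp add: DERIV_cmult_right)
  qed
  have "continuous_on UNIV (\<lambda>z::real \<times> 'a. grad g (fst z *\<^sub>R snd z))"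
    by (rule continuous_on_compose2[OF cg]) (auto intro!: continuous_intros)
  moreover have "continuous_on UNIV (\<lambda>z::real \<times> 'a. V (snd z))"
    by (rule continuous_on_compose2[OF cV]) (auto intro!: continuous_intros)
  ultimately have "continuous_on UNIV (\<lambda>z::real \<times> 'a. (grad g (fst z *\<^sub>R snd z) \<bullet> snd z) * V (snd z))"
    by (intro continuous_intros)
  then have "continuous_on (UNIV \<times> cbox u w) (\<lambda>(s, x). (grad g (s *\<^sub>R x) \<bullet> x) * V x)"
    unfolding split_beta by (rule continuous_on_subset) auto
  from leibniz_rule_field_derivative[OF der int this] show ?thesis by simp
qed

lemma compact_dilation_preimage_bounds:
  fixes K :: "'a::euclidean_space set"
  assumes K: "compact K" "0 \<notin> K"
  obtains d M where "d > 0"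
    "\<And>t x. t \<in> {1/2<..<2} \<Longrightarrow> t *\<^sub>R x \<in> K \<Longrightarrow> d \<le> norm x \<and> x \<in> cbox (- M) M"
proof -
  have "open (- K)" using K(1) compact_imp_closed by blast
  then obtain d where d: "d > 0" "ball 0 d \<subseteq> - K" using K(2) open_contains_ball_eq by blast
  obtain R where R: "\<And>x. x \<in> K \<Longrightarrow> norm x \<le> R"
    using compact_imp_bounded[OF K(1)] bounded_pos by blast
  obtain M where M: "cball 0 (2 * R) \<subseteq> cbox (- M) (M::'a)"
    using bounded_subset_cbox_symmetric[of "cball 0 (2 * R)"] by auto
  have "d / 2 \<le> norm x \<and> x \<in> cbox (- M) M" if "t \<in> {1/2<..<2}" "t *\<^sub>R x \<in> K" for t x
  proof
    have "d \<le> t * norm x" using d that by (force simp: subset_iff)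
    also have "\<dots> \<le> 2 * norm x" using that by (intro mult_right_mono) auto
    finally show "d / 2 \<le> norm x" by simp
    have "(1/2) * norm x \<le> t * norm x" using that by (intro mult_right_mono) auto
    also have "\<dots> \<le> R" using R[OF that(2)] that by simp
    finally show "x \<in> cbox (- M) M" using M by auto
  qed
  with d show ?thesis by (intro that[of "d / 2" M]) auto
qed

lemma has_field_derivative_integral_dilation:
  fixes g W :: "'a::euclidean_space \<Rightarrow> real"
  assumes g: "C1c_punct K g" and W: "continuous_on (-{0}) W"
  shows "((\<lambda>t. integral UNIV (\<lambda>x. g (t *\<^sub>R x) * W x)) has_field_derivative
           integral UNIV (\<lambda>x. (grad g x \<bullet> x) * W x)) (at 1)"
proof -
  have vanish: "g y = 0" "grad g y = 0" if "y \<notin> K" for y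
    using g C1c_punct_grad_eq_0[OF g] that by (auto simp: C1c_punct_def)
  obtain d M where d: "d > 0" and supp:
    "\<And>t x. t \<in> {1/2<..<2} \<Longrightarrow> t *\<^sub>R x \<in> K \<Longrightarrow> d \<le> norm x \<and> x \<in> cbox (- M) M"
    using compact_dilation_preimage_bounds[of K] g by (auto simp: C1c_punct_def)
  txt \<open>For t near 1, g(t x) vanishes near x = 0 and outside a box, so W may be replaced by a
    continuous cutoff V and the integrals over UNIV by integrals over the box, where Leibniz's rule
    for differentiation under the integral sign applies.\<close>
  obtain V where V: "continuous_on UNIV V" "\<And>x. norm x \<ge> d \<Longrightarrow> V x = W x"
    using continuous_cutoff_near_0[OF W d] by auto
  have eq: "integral UNIV (\<lambda>x. g (t *\<^sub>R x) * W x) = integral (cbox (- M) M) (\<lambda>x. g (t *\<^sub>R x) * V x)"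
    if "t \<in> {1/2<..<2}" for t
  proof -
    have "g (t *\<^sub>R x) * W x = (if x \<in> cbox (- M) M then g (t *\<^sub>R x) * V x else 0)" for x
      by (cases "t *\<^sub>R x \<in> K") (use supp[OF that] vanish V(2) in auto)
    then show ?thesis by (simp add: integral_restrict_UNIV)
  qed
  have eq1: "integral UNIV (\<lambda>x. (grad g x \<bullet> x) * W x)
      = integral (cbox (- M) M) (\<lambda>x. (grad g (1 *\<^sub>R x) \<bullet> x) * V x)"
  proof -
    have "(grad g x \<bullet> x) * W x = (if x \<in> cbox (- M) M then (grad g (1 *\<^sub>R x) \<bullet> x) * V x else 0)" for x
      by (cases "x \<in> K") (use supp[of 1 x] vanish V(2) in auto)
    then show ?thesis by (simp add: integral_restrict_UNIV)
  qed
  have "((\<lambda>t. integral (cbox (- M) M) (\<lambda>x. g (t *\<^sub>R x) * V x)) has_field_derivative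
      integral (cbox (- M) M) (\<lambda>x. (grad g (1 *\<^sub>R x) \<bullet> x) * V x)) (at 1)"
    using g V(1) by (intro has_field_derivative_integral_cbox_dilation C1c_punct_has_derivative)
      (auto simp: C1c_punct_def)
  then show ?thesis unfolding eq1
    by (rule has_field_derivative_transform_within_open[of _ _ _ "{1/2<..<2}"]) (auto simp: eq)
qed

section \<open>Radial integration by parts\<close>

lemma integral_grad_radial_eqI:
  fixes g W :: "'a::euclidean_space \<Rightarrow> real"
  assumes g: "C1c_punct K g" and W: "continuous_on (-{0}) W"
    and \<psi>: "\<And>t. t > 0 \<Longrightarrow> integral UNIV (\<lambda>x. g (t *\<^sub>R x) * W x) = \<psi> t"
    and D: "(\<psi> has_field_derivative D) (at 1)"
  shows "integral UNIV (\<lambda>x. (grad g x \<bullet> x) * W x) = D"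
proof -
  have "((\<lambda>t. integral UNIV (\<lambda>x. g (t *\<^sub>R x) * W x)) has_field_derivative D) (at 1)"
    by (rule has_field_derivative_transform_within_open[OF D, of "{0<..}"]) (auto simp: \<psi>)
  then show ?thesis
    using DERIV_unique[OF has_field_derivative_integral_dilation[OF g W]] by blast
qed

lemma integral_grad_radial_powr:
  fixes g :: "'a::euclidean_space \<Rightarrow> real"
  assumes g: "C1c_punct K g"
  shows "integral UNIV (\<lambda>x. (grad g x \<bullet> x) * norm x powr (- \<beta>))
     = (\<beta> - DIM('a)) * integral UNIV (\<lambda>x. g x * norm x powr (- \<beta>))"
proof (rule integral_grad_radial_eqI[OF g])
  define C where "C = integral UNIV (\<lambda>x. g x * norm x powr (- \<beta>))"
  show W: "continuous_on (-{0}) (\<lambda>x::'a. norm x powr (- \<beta>))"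
    by (intro continuous_intros) auto
  show "integral UNIV (\<lambda>x. g (t *\<^sub>R x) * norm x powr (- \<beta>)) = t powr (\<beta> - DIM('a)) * C"
    if t: "t > 0" for t
  proof -
    have "norm (y /\<^sub>R t) powr (- \<beta>) = t powr \<beta> * norm y powr (- \<beta>)" for y :: 'a
      using t by (simp add: powr_divide powr_minus field_simps)
    then have "integral UNIV (\<lambda>x. g (t *\<^sub>R x) * norm x powr (- \<beta>))
        = integral UNIV (\<lambda>y. t powr \<beta> * (g y * norm y powr (- \<beta>))) / t ^ DIM('a)"
      using C1c_punct_integral_dilation[OF g W t] by (simp add: mult.left_commute)
    also have "\<dots> = t powr (\<beta> - DIM('a)) * C"
      using t by (simp add: C_def powr_diff powr_realpow)
    finally show ?thesis .
  qed
  show "((\<lambda>t. t powr (\<beta> - DIM('a)) * C) has_field_derivative (\<beta> - DIM('a)) * C) (at 1)"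
    by (auto intro!: derivative_eq_intros)
qed

lemma integral_grad_radial_log:
  fixes g :: "'a::euclidean_space \<Rightarrow> real"
  assumes g: "C1c_punct K g"
  shows "integral UNIV (\<lambda>x. (grad g x \<bullet> x) * (norm x powr (- DIM('a)) * ln (norm x)))
     = - integral UNIV (\<lambda>x. g x * norm x powr (- DIM('a)))"
proof (rule integral_grad_radial_eqI[OF g])
  define C1 where "C1 = integral UNIV (\<lambda>x. g x * (norm x powr (- DIM('a)) * ln (norm x)))"
  define C0 where "C0 = integral UNIV (\<lambda>x. g x * norm x powr (- DIM('a)))"
  have W0: "continuous_on (-{0}) (\<lambda>x::'a. norm x powr (- DIM('a)))"
    by (intro continuous_intros) auto
  show W: "continuous_on (-{0}) (\<lambda>x::'a. norm x powr (- DIM('a)) * ln (norm x))"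
    by (intro continuous_intros) auto
  show "integral UNIV (\<lambda>x. g (t *\<^sub>R x) * (norm x powr (- DIM('a)) * ln (norm x))) = C1 - ln t * C0"
    if t: "t > 0" for t
  proof -
    have "g y * (norm (y /\<^sub>R t) powr (- DIM('a)) * ln (norm (y /\<^sub>R t)))
        = t ^ DIM('a) * (g y * (norm y powr (- DIM('a)) * ln (norm y)))
          - t ^ DIM('a) * ln t * (g y * norm y powr (- DIM('a)))" for y :: 'a
      using t by (cases "y = 0") (simp_all add: ln_div powr_divide powr_minus powr_realpow field_simps)
    moreover have "integral UNIV (\<lambda>y. t ^ DIM('a) * (g y * (norm y powr (- DIM('a)) * ln (norm y)))
        - t ^ DIM('a) * ln t * (g y * norm y powr (- DIM('a)))) = t ^ DIM('a) * C1 - t ^ DIM('a) * ln t * C0"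
    proof -
      have "(\<lambda>x. g x * (norm x powr (- DIM('a)) * ln (norm x))) integrable_on UNIV"
        "(\<lambda>x. g x * norm x powr (- DIM('a))) integrable_on UNIV"
        using W W0 by (auto intro!: integrable_on_lborel C1c_punct_integrable_weighted[OF g])
      then show ?thesis
        by (subst integral_diff) (auto simp: C1_def C0_def intro: integrable_on_mult_right)
    qed
    ultimately have "integral UNIV (\<lambda>x. g (t *\<^sub>R x) * (norm x powr (- DIM('a)) * ln (norm x)))
        = (t ^ DIM('a) * C1 - t ^ DIM('a) * ln t * C0) / t ^ DIM('a)"
      using C1c_punct_integral_dilation[OF g W t] by simp
    also have "\<dots> = C1 - ln t * C0"
      using t by (simp add: diff_divide_distrib)
    finally show ?thesis by simp
  qed
  show "((\<lambda>t. C1 - ln t * C0) has_field_derivative - C0) (at 1)"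
    by (auto intro!: derivative_eq_intros)
qed

lemma Lp_norm_nonneg: "Lp_norm p g \<ge> 0"
  by (simp add: Lp_norm_def)

lemma Lp_norm_powr:
  assumes "p > 0"
  shows "Lp_norm p g powr p = (\<integral>x. \<bar>g x\<bar> powr p \<partial>lborel)"
proof -
  have "(\<integral>x. \<bar>g x\<bar> powr p \<partial>lborel) \<ge> 0" by (rule integral_nonneg_AE) auto
  then show ?thesis using assms by (simp add: Lp_norm_def powr_powr)
qed

lemma Lp_norm_abs_powr:
  assumes "P > 0" "s > 0"
  shows "Lp_norm P (\<lambda>x. \<bar>h x\<bar> powr s) = Lp_norm (P * s) h powr s"
  using assms by (simp add: Lp_norm_def powr_powr mult.commute)

lemma Lp_norm_eq_0_if_AE_0:
  assumes "AE x in lborel. g x = 0"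
  shows "Lp_norm p g = 0"
proof -
  have "(\<integral>x. \<bar>g x\<bar> powr p \<partial>lborel) = 0"
    using assms by (intro integral_eq_zero_AE) (auto elim!: eventually_mono)
  then show ?thesis by (simp add: Lp_norm_def)
qed

lemma Holder_inequality_lborel:
  fixes F G :: "'a::euclidean_space \<Rightarrow> real"
  assumes PQ: "P > 1" "Q > 1" "1/P + 1/Q = 1"
    and iF: "integrable lborel (\<lambda>x. \<bar>F x\<bar> powr P)" and iG: "integrable lborel (\<lambda>x. \<bar>G x\<bar> powr Q)"
    and iFG: "integrable lborel (\<lambda>x. F x * G x)"
  shows "(\<integral>x. \<bar>F x * G x\<bar> \<partial>lborel) \<le> Lp_norm P F * Lp_norm Q G"
proof -
  define \<alpha> \<beta> where "\<alpha> = Lp_norm P F" and "\<beta> = Lp_norm Q G"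
  have \<alpha>P: "\<alpha> powr P = (\<integral>x. \<bar>F x\<bar> powr P \<partial>lborel)" and \<beta>Q: "\<beta> powr Q = (\<integral>x. \<bar>G x\<bar> powr Q \<partial>lborel)"
    using PQ by (simp_all add: \<alpha>_def \<beta>_def Lp_norm_powr)
  have vanish: "(\<integral>x. \<bar>F x * G x\<bar> \<partial>lborel) = 0"
    if "AE x in lborel. F x = 0 \<or> G x = 0"
    using that by (intro integral_eq_zero_AE) (auto elim!: eventually_mono)
  consider "\<alpha> = 0" | "\<beta> = 0" | "\<alpha> > 0" "\<beta> > 0"
    using Lp_norm_nonneg[of P F] Lp_norm_nonneg[of Q G] \<alpha>_def \<beta>_def by linarith
  then show ?thesis
  proof cases
    case 1
    then have "AE x in lborel. \<bar>F x\<bar> powr P = 0"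
      using integral_nonneg_eq_0_iff_AE[OF iF] \<alpha>P PQ by auto
    then have "AE x in lborel. F x = 0 \<or> G x = 0" by (auto elim!: eventually_mono)
    then show ?thesis using vanish 1 by (simp add: \<alpha>_def \<beta>_def)
  next
    case 2
    then have "AE x in lborel. \<bar>G x\<bar> powr Q = 0"
      using integral_nonneg_eq_0_iff_AE[OF iG] \<beta>Q PQ by auto
    then have "AE x in lborel. F x = 0 \<or> G x = 0" by (auto elim!: eventually_mono)
    then show ?thesis using vanish 2 by (simp add: \<alpha>_def \<beta>_def)
  next
    case 3
    have Young: "\<bar>F x * G x\<bar> / (\<alpha> * \<beta>)
        \<le> \<bar>F x\<bar> powr P / (P * \<alpha> powr P) + \<bar>G x\<bar> powr Q / (Q * \<beta> powr Q)" for x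
    proof -
      have "(\<bar>F x\<bar> / \<alpha>) * (\<bar>G x\<bar> / \<beta>) \<le> (\<bar>F x\<bar> / \<alpha>) powr P / P + (\<bar>G x\<bar> / \<beta>) powr Q / Q"
        using PQ 3 by (intro Youngs_inequality) auto
      then show ?thesis using 3 by (simp add: powr_divide abs_mult mult.commute)
    qed
    have "(\<integral>x. \<bar>F x * G x\<bar> \<partial>lborel) / (\<alpha> * \<beta>) = (\<integral>x. \<bar>F x * G x\<bar> / (\<alpha> * \<beta>) \<partial>lborel)"
      by simp
    also have "\<dots> \<le> (\<integral>x. \<bar>F x\<bar> powr P / (P * \<alpha> powr P) + \<bar>G x\<bar> powr Q / (Q * \<beta> powr Q) \<partial>lborel)"
      using iF iG iFG Young by (intro integral_mono) auto
    also have "\<dots> = 1"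
      using iF iG 3 PQ by (simp add: \<alpha>P[symmetric] \<beta>Q[symmetric])
    finally show ?thesis using 3 by (simp add: \<alpha>_def \<beta>_def divide_le_eq)
  qed
qed

lemma C1c_punct_integrable_Lp_weighted:
  assumes f: "C1c_punct K f" and s: "s > 0" and \<omega>: "continuous_on (-{0}) \<omega>"
  shows "integrable lborel (\<lambda>x. \<bar>\<omega> x * f x\<bar> powr s)"
proof (rule integrable_lborel_compact_support_punct)
  show "compact K" "0 \<notin> K" "\<And>x. x \<notin> K \<Longrightarrow> \<bar>\<omega> x * f x\<bar> powr s = 0"
    using f by (auto simp: C1c_punct_def)
  have "continuous_on (-{0}) (\<lambda>x. \<bar>\<omega> x * f x\<bar>)"
    using C1c_punct_continuous[OF f] \<omega> by (intro continuous_intros) (auto intro: continuous_on_subset)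
  then show "continuous_on (-{0}) (\<lambda>x. \<bar>\<omega> x * f x\<bar> powr s)"
    using s by (intro continuous_on_powr') auto
qed

lemma C1c_punct_AE_0_if_Lp_norm_eq_0:
  assumes f: "C1c_punct K f" and s: "s > 0" and zero: "Lp_norm s (\<lambda>x. norm x powr e * f x) = 0"
  shows "AE x in lborel. f x = 0"
proof -
  have int: "integrable lborel (\<lambda>x. \<bar>norm x powr e * f x\<bar> powr s)"
    using s by (intro C1c_punct_integrable_Lp_weighted[OF f]) (auto intro!: continuous_intros)
  have "(\<integral>x. \<bar>norm x powr e * f x\<bar> powr s \<partial>lborel) = 0"
    using Lp_norm_powr[OF s, of "\<lambda>x. norm x powr e * f x"] zero s by simp
  then have "AE x in lborel. \<bar>norm x powr e * f x\<bar> powr s = 0"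
    using integral_nonneg_eq_0_iff_AE[OF int] by auto
  with AE_lborel_singleton[of 0] show ?thesis by eventually_elim auto
qed

lemma C1c_punct_abs_powr:
  assumes f: "C1c_punct K f" and p: "p > 1"
  shows "C1c_punct K (\<lambda>x. \<bar>f x\<bar> powr p)"
    and "grad (\<lambda>x. \<bar>f x\<bar> powr p) x = abs_powr_deriv p (f x) *\<^sub>R grad f x"
  using C1c_punct_comp[OF f _ has_real_derivative_abs_powr continuous_on_abs_powr_deriv] p by auto

lemma C1c_punct_integral_abs_powr_weighted:
  assumes f: "C1c_punct K f" and p: "p > 1"
  shows "integral UNIV (\<lambda>x. \<bar>f x\<bar> powr p * norm x powr (e * p))
     = Lp_norm p (\<lambda>x. norm x powr e * f x) powr p"
proof -
  have "integrable lborel (\<lambda>x. \<bar>f x\<bar> powr p * norm x powr (e * p))"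
    by (rule C1c_punct_integrable_weighted[OF C1c_punct_abs_powr(1)[OF f p]]) (auto intro!: continuous_intros)
  then show ?thesis
    using p by (simp add: integral_lborel Lp_norm_powr abs_mult powr_mult powr_powr mult.commute)
qed

lemma mult_powr_le_cancel:
  fixes k c N M p :: real
  assumes le: "k * N powr p \<le> c * N powr (p - 1) * M" and "N \<ge> 0" "c * M \<ge> 0"
  shows "k * N \<le> c * M"
proof (cases "N = 0")
  case False
  then have "N powr p = N powr (p - 1) * N" using assms by (simp add: powr_diff)
  with le have "N powr (p - 1) * (k * N) \<le> N powr (p - 1) * (c * M)"
    by (simp add: algebra_simps)
  then show ?thesis using False assms by (simp add: mult_le_cancel_left_pos)
qed (use assms in simp)

section \<open>Weighted Hardy inequalities\<close>

lemma abs_powr_deriv_inner_le: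
  fixes v x :: "'a::real_inner"
  assumes p: "p > 1"
  shows "\<bar>abs_powr_deriv p y * (v \<bullet> x) * (norm x powr ((a - 1) * p) * w)\<bar>
    \<le> p * \<bar>\<bar>norm x powr (a - 1) * y\<bar> powr (p - 1) * (norm x powr a * w * norm v)\<bar>"
proof (cases "x = 0")
  case False
  have "norm x powr ((a - 1) * (p - 1)) * norm x powr a = norm x powr (1 + (a - 1) * p)"
    by (simp add: powr_add[symmetric] algebra_simps)
  also have "\<dots> = norm x * norm x powr ((a - 1) * p)"
    using False by (simp add: powr_add)
  finally have ex: "norm x * norm x powr ((a - 1) * p) = norm x powr ((a - 1) * (p - 1)) * norm x powr a" ..
  have "\<bar>abs_powr_deriv p y * (v \<bullet> x) * (norm x powr ((a - 1) * p) * w)\<bar>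
      = p * \<bar>y\<bar> powr (p - 1) * \<bar>v \<bullet> x\<bar> * (norm x powr ((a - 1) * p) * \<bar>w\<bar>)"
    using p by (simp add: abs_mult abs_abs_powr_deriv)
  also have "\<dots> \<le> p * \<bar>y\<bar> powr (p - 1) * (norm v * norm x) * (norm x powr ((a - 1) * p) * \<bar>w\<bar>)"
    using p by (intro mult_right_mono mult_left_mono Cauchy_Schwarz_ineq2) auto
  also have "\<dots> = p * (\<bar>y\<bar> powr (p - 1) * norm v * \<bar>w\<bar>) * (norm x * norm x powr ((a - 1) * p))"
    by (simp add: algebra_simps)
  also have "\<dots> = p * \<bar>\<bar>norm x powr (a - 1) * y\<bar> powr (p - 1) * (norm x powr a * w * norm v)\<bar>"
    unfolding ex by (simp add: abs_mult powr_mult powr_powr algebra_simps)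
  finally show ?thesis .
qed (use p in simp)

lemma Hardy_integral_bound:
  fixes f \<omega> :: "'a::euclidean_space \<Rightarrow> real"
  assumes f: "C1c_punct K f" and p: "p > 1" and \<omega>: "continuous_on (-{0}) \<omega>"
  shows "\<bar>integral UNIV (\<lambda>x. abs_powr_deriv p (f x) * (grad f x \<bullet> x) * (norm x powr ((a - 1) * p) * \<omega> x))\<bar>
    \<le> p * Lp_norm p (\<lambda>x. norm x powr (a - 1) * f x) powr (p - 1)
        * Lp_norm p (\<lambda>x. norm x powr a * \<omega> x * norm (grad f x))"
proof -
  define h where "h x = abs_powr_deriv p (f x) * (grad f x \<bullet> x) * (norm x powr ((a - 1) * p) * \<omega> x)" for x
  define F G where "F = (\<lambda>x. \<bar>norm x powr (a - 1) * f x\<bar> powr (p - 1))"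
    and "G = (\<lambda>x. norm x powr a * \<omega> x * norm (grad f x))"
  have vanish: "\<And>x. x \<notin> K \<Longrightarrow> f x = 0 \<and> grad f x = 0"
    using f C1c_punct_grad_eq_0[OF f] by (auto simp: C1c_punct_def)
  have int: "integrable lborel u" if "continuous_on (-{0}) u" "\<And>x. x \<notin> K \<Longrightarrow> u x = 0" for u :: "'a \<Rightarrow> real"
    using f that by (intro integrable_lborel_compact_support_punct[of K]) (auto simp: C1c_punct_def)
  have cf: "continuous_on (-{0}) f" "continuous_on (-{0}) (grad f)"
    using f C1c_punct_continuous[OF f] by (auto simp: C1c_punct_def intro: continuous_on_subset)
  have cD: "continuous_on (-{0}) (\<lambda>x. abs_powr_deriv p (f x))"
    using continuous_on_compose2[OF continuous_on_abs_powr_deriv[OF p] cf(1)] by simp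
  have iF: "integrable lborel (\<lambda>x. \<bar>F x\<bar> powr (p / (p - 1)))"
    using p C1c_punct_integrable_Lp_weighted[OF f, of p "\<lambda>x. norm x powr (a - 1)"]
    by (simp add: F_def powr_powr continuous_intros)
  have iG: "integrable lborel (\<lambda>x. \<bar>G x\<bar> powr p)" and iFG: "integrable lborel (\<lambda>x. F x * G x)"
    and ih: "integrable lborel h"
    using vanish p by (auto simp: F_def G_def h_def intro!: int continuous_intros continuous_on_powr' cf cD \<omega>)
  have "\<bar>integral UNIV h\<bar> = \<bar>\<integral>x. h x \<partial>lborel\<bar>" using integral_lborel[OF ih] by simp
  also have "\<dots> \<le> (\<integral>x. p * \<bar>F x * G x\<bar> \<partial>lborel)"
  proof (rule integral_abs_bound_integral[OF ih])
    show "integrable lborel (\<lambda>x. p * \<bar>F x * G x\<bar>)" using iFG by auto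
    show "\<bar>h x\<bar> \<le> p * \<bar>F x * G x\<bar>" for x
      unfolding h_def F_def G_def by (rule abs_powr_deriv_inner_le[OF p])
  qed
  also have "\<dots> = p * (\<integral>x. \<bar>F x * G x\<bar> \<partial>lborel)" by simp
  also have "\<dots> \<le> p * (Lp_norm (p / (p - 1)) F * Lp_norm p G)"
    using p by (intro mult_left_mono Holder_inequality_lborel iF iG iFG) (auto simp: field_simps)
  also have "Lp_norm (p / (p - 1)) F = Lp_norm p (\<lambda>x. norm x powr (a - 1) * f x) powr (p - 1)"
    unfolding F_def using p by (subst Lp_norm_abs_powr) auto
  finally show ?thesis by (simp add: h_def G_def mult.assoc)
qed

lemma weighted_Hardy_inequality:
  fixes f :: "'a::euclidean_space \<Rightarrow> real"
  assumes f: "C1c_punct K f" and p: "p > 1" and n: "real DIM('a) \<noteq> p * (1 - a)"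
  shows "Lp_norm p (\<lambda>x. norm x powr (a - 1) * f x)
     \<le> \<bar>p / (real DIM('a) - p * (1 - a))\<bar> * Lp_norm p (\<lambda>x. norm x powr a * norm (grad f x))"
proof -
  define N M where "N = Lp_norm p (\<lambda>x. norm x powr (a - 1) * f x)"
    and "M = Lp_norm p (\<lambda>x. norm x powr a * norm (grad f x))"
  define I where "I = integral UNIV (\<lambda>x. abs_powr_deriv p (f x) * (grad f x \<bullet> x) * (norm x powr ((a - 1) * p) * 1))"
  have e: "(a - 1) * p = - (p * (1 - a))" by (simp add: algebra_simps)
  have "I = (p * (1 - a) - DIM('a)) * N powr p"
    using integral_grad_radial_powr[OF C1c_punct_abs_powr(1)[OF f p], of "p * (1 - a)"]
      C1c_punct_integral_abs_powr_weighted[OF f p, of "a - 1"]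
    unfolding I_def N_def e by (simp add: C1c_punct_abs_powr(2)[OF f p])
  then have "\<bar>I\<bar> = \<bar>real DIM('a) - p * (1 - a)\<bar> * N powr p"
    by (simp add: abs_mult abs_minus_commute)
  moreover have "\<bar>I\<bar> \<le> p * N powr (p - 1) * M"
    using Hardy_integral_bound[OF f p, of "\<lambda>_. 1" a] by (simp add: I_def N_def M_def)
  ultimately have "\<bar>real DIM('a) - p * (1 - a)\<bar> * N powr p \<le> p * N powr (p - 1) * M"
    by simp
  then have "\<bar>real DIM('a) - p * (1 - a)\<bar> * N \<le> p * M"
    by (rule mult_powr_le_cancel) (use p in \<open>auto simp: N_def M_def Lp_norm_nonneg\<close>)
  then have "N \<le> p * M / \<bar>real DIM('a) - p * (1 - a)\<bar>"
    using n by (simp add: field_simps)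
  also have "\<dots> = \<bar>p / (real DIM('a) - p * (1 - a))\<bar> * M"
    using p by simp
  finally show ?thesis by (simp add: N_def M_def)
qed

lemma weighted_Hardy_inequality_log:
  fixes f :: "'a::euclidean_space \<Rightarrow> real"
  assumes f: "C1c_punct K f" and p: "p > 1" and n: "real DIM('a) = p * (1 - a)"
  shows "Lp_norm p (\<lambda>x. norm x powr (a - 1) * f x)
     \<le> p * Lp_norm p (\<lambda>x. norm x powr a * ln (norm x) * norm (grad f x))"
proof -
  define N M where "N = Lp_norm p (\<lambda>x. norm x powr (a - 1) * f x)"
    and "M = Lp_norm p (\<lambda>x. norm x powr a * ln (norm x) * norm (grad f x))"
  have e: "(a - 1) * p = - real DIM('a)" using n by (simp add: algebra_simps)
  have "integral UNIV (\<lambda>x. abs_powr_deriv p (f x) * (grad f x \<bullet> x) * (norm x powr ((a - 1) * p) * ln (norm x)))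
      = - (N powr p)"
    using integral_grad_radial_log[OF C1c_punct_abs_powr(1)[OF f p]]
      C1c_punct_integral_abs_powr_weighted[OF f p, of "a - 1"]
    unfolding e by (simp add: C1c_punct_abs_powr(2)[OF f p] N_def)
  moreover have "continuous_on (-{0}) (\<lambda>x::'a. ln (norm x))" by (intro continuous_intros) auto
  ultimately have "1 * N powr p \<le> p * N powr (p - 1) * M"
    using Hardy_integral_bound[OF f p, of "\<lambda>x. ln (norm x)" a] by (simp add: N_def M_def)
  then have "1 * N \<le> p * M"
    by (rule mult_powr_le_cancel) (use p in \<open>auto simp: N_def M_def Lp_norm_nonneg\<close>)
  then show ?thesis by (simp add: N_def M_def)
qed

section \<open>Interpolation\<close>

lemma Lp_norm_interpolation:
  fixes u v :: "'a::euclidean_space \<Rightarrow> real"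
  assumes \<delta>: "0 < \<delta>" "\<delta> < 1" and p: "p > 0" and q: "q > 0" and r: "r > 0"
    and exps: "\<delta> * r / p + (1 - \<delta>) * r / q = 1"
    and iu: "integrable lborel (\<lambda>x. \<bar>u x\<bar> powr p)" and iv: "integrable lborel (\<lambda>x. \<bar>v x\<bar> powr q)"
    and iuv: "integrable lborel (\<lambda>x. \<bar>u x\<bar> powr (\<delta> * r) * \<bar>v x\<bar> powr ((1 - \<delta>) * r))"
  shows "Lp_norm r (\<lambda>x. \<bar>u x\<bar> powr \<delta> * \<bar>v x\<bar> powr (1 - \<delta>))
     \<le> Lp_norm p u powr \<delta> * Lp_norm q v powr (1 - \<delta>)"
proof -
  define P Q where "P = p / (\<delta> * r)" and "Q = q / ((1 - \<delta>) * r)"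
  have "\<delta> * r / p > 0" "(1 - \<delta>) * r / q > 0" using \<delta> p q r by auto
  then have "\<delta> * r / p < 1" "(1 - \<delta>) * r / q < 1" using exps by linarith+
  then have PQ: "P > 1" "Q > 1" "1/P + 1/Q = 1"
    using \<delta> p q r exps by (simp_all add: P_def Q_def less_divide_eq_1_pos)
  define F G where "F = (\<lambda>x. \<bar>u x\<bar> powr (\<delta> * r))" and "G = (\<lambda>x. \<bar>v x\<bar> powr ((1 - \<delta>) * r))"
  have "Lp_norm r (\<lambda>x. \<bar>u x\<bar> powr \<delta> * \<bar>v x\<bar> powr (1 - \<delta>)) powr r = (\<integral>x. \<bar>F x * G x\<bar> \<partial>lborel)"
    using r by (simp add: Lp_norm_powr F_def G_def abs_mult powr_mult powr_powr mult.commute)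
  also have "\<dots> \<le> Lp_norm P F * Lp_norm Q G"
    using \<delta> p q r iu iv iuv
    by (intro Holder_inequality_lborel PQ) (simp_all add: F_def G_def P_def Q_def powr_powr)
  also have "\<dots> = (Lp_norm p u powr \<delta> * Lp_norm q v powr (1 - \<delta>)) powr r"
    using \<delta> p q r
    by (simp add: F_def G_def P_def Q_def Lp_norm_abs_powr Lp_norm_nonneg powr_mult powr_powr)
  finally show ?thesis
    using r Lp_norm_nonneg powr_less_mono2 by (meson mult_nonneg_nonneg not_le powr_ge_zero)
qed

lemma abs_norm_powr_mult_interpolate:
  fixes x :: "'a::real_normed_vector" and y :: real
  assumes "c = \<delta> * \<alpha> + (1 - \<delta>) * \<beta>"
  shows "\<bar>norm x powr c * y\<bar> = \<bar>norm x powr \<alpha> * y\<bar> powr \<delta> * \<bar>norm x powr \<beta> * y\<bar> powr (1 - \<delta>)"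
proof -
  have split: "\<bar>norm x powr e * y\<bar> powr s = norm x powr (e * s) * \<bar>y\<bar> powr s" for e s
    by (simp add: abs_mult powr_mult powr_powr)
  have "\<bar>norm x powr \<alpha> * y\<bar> powr \<delta> * \<bar>norm x powr \<beta> * y\<bar> powr (1 - \<delta>)
      = (norm x powr (\<alpha> * \<delta>) * norm x powr (\<beta> * (1 - \<delta>))) * (\<bar>y\<bar> powr \<delta> * \<bar>y\<bar> powr (1 - \<delta>))"
    unfolding split by (simp only: mult_ac)
  also have "\<bar>y\<bar> powr \<delta> * \<bar>y\<bar> powr (1 - \<delta>) = \<bar>y\<bar>"
    by (cases "y = 0") (simp_all add: powr_add[symmetric])
  also have "norm x powr (\<alpha> * \<delta>) * norm x powr (\<beta> * (1 - \<delta>)) = norm x powr c"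
    using assms by (simp add: powr_add[symmetric] mult.commute)
  finally show ?thesis by (simp add: abs_mult)
qed

lemma weighted_Lp_interpolation:
  fixes f :: "'a::euclidean_space \<Rightarrow> real"
  assumes f: "C1c_punct K f" and p: "p > 0" and q: "q > 0" and r: "r > 0"
    and \<delta>: "0 \<le> \<delta>" "\<delta> \<le> 1" and exps: "\<delta> * r / p + (1 - \<delta>) * r / q = 1"
    and c: "c = \<delta> * \<alpha> + (1 - \<delta>) * \<beta>"
  shows "Lp_norm r (\<lambda>x. norm x powr c * f x)
     \<le> Lp_norm p (\<lambda>x. norm x powr \<alpha> * f x) powr \<delta> * Lp_norm q (\<lambda>x. norm x powr \<beta> * f x) powr (1 - \<delta>)"
proof (cases "AE x in lborel. f x = 0")
  case True
  then have "AE x in lborel. norm x powr c * f x = 0" by (auto elim!: eventually_mono)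
  then show ?thesis by (simp add: Lp_norm_eq_0_if_AE_0)
next
  case False
  let ?u = "\<lambda>x. norm x powr \<alpha> * f x" and ?v = "\<lambda>x. norm x powr \<beta> * f x"
  txt \<open>Needed for \<open>\<delta> \<in> {0, 1}\<close>, since \<open>0 powr 0 = 0\<close>.\<close>
  have nz: "Lp_norm p ?u \<noteq> 0" "Lp_norm q ?v \<noteq> 0"
    using False C1c_punct_AE_0_if_Lp_norm_eq_0[OF f p] C1c_punct_AE_0_if_Lp_norm_eq_0[OF f q] by blast+
  note pw = abs_norm_powr_mult_interpolate[OF c]
  have int: "integrable lborel (\<lambda>x. \<bar>norm x powr e * f x\<bar> powr s)" if "s > 0" for e s
    using that by (intro C1c_punct_integrable_Lp_weighted[OF f]) (auto intro!: continuous_intros)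
  consider "\<delta> = 0" | "\<delta> = 1" | "0 < \<delta>" "\<delta> < 1" using \<delta> by linarith
  then show ?thesis
  proof cases
    case 3
    have "Lp_norm r (\<lambda>x. norm x powr c * f x) = Lp_norm r (\<lambda>x. \<bar>?u x\<bar> powr \<delta> * \<bar>?v x\<bar> powr (1 - \<delta>))"
      unfolding Lp_norm_def pw by simp
    also have "\<dots> \<le> Lp_norm p ?u powr \<delta> * Lp_norm q ?v powr (1 - \<delta>)"
    proof (rule Lp_norm_interpolation[OF 3 p q r exps int int])
      have "\<bar>norm x powr c * f x\<bar> powr r = \<bar>?u x\<bar> powr (\<delta> * r) * \<bar>?v x\<bar> powr ((1 - \<delta>) * r)" for x
        unfolding pw by (simp add: powr_mult powr_powr)
      with int[OF r, of c] show "integrable lborel (\<lambda>x. \<bar>?u x\<bar> powr (\<delta> * r) * \<bar>?v x\<bar> powr ((1 - \<delta>) * r))"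
        by simp
    qed (use p q in auto)
    finally show ?thesis .
  qed (use exps c p q nz in auto)
qed

lemma le_trans_powr_mult:
  fixes L N B k M \<delta> :: real
  assumes "L \<le> N powr \<delta> * B" "N \<le> k * M" "0 \<le> N" "0 \<le> k" "0 \<le> M" "0 \<le> \<delta>" "0 \<le> B"
  shows "L \<le> k powr \<delta> * M powr \<delta> * B"
proof -
  have "N powr \<delta> \<le> (k * M) powr \<delta>" using assms by (intro powr_mono2) auto
  also have "\<dots> = k powr \<delta> * M powr \<delta>" using assms by (simp add: powr_mult)
  finally show ?thesis using assms by (meson mult_right_mono order_trans)
qed

theorem theorem1p2:
  fixes f :: "'a::euclidean_space \<Rightarrow> real"
    and p q r \<delta> a b c :: real
  assumes "1 < p" and "1 < q" and "0 < r" and "p + q \<ge> r"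
    and "0 \<le> \<delta>" and "\<delta> \<le> 1" and "(r - q) / r \<le> \<delta>" and "\<delta> \<le> p / r"
    and "\<delta> * r / p + (1 - \<delta>) * r / q = 1"
    and "c = \<delta> * (a - 1) + b * (1 - \<delta>)"
    and "C0_inf_punct f"
  shows "(real DIM('a) \<noteq> p * (1 - a) \<longrightarrow>
           Lp_norm r (\<lambda>x. norm x powr c * f x)
             \<le> \<bar>p / (real DIM('a) - p * (1 - a))\<bar> powr \<delta>
                * Lp_norm p (\<lambda>x. norm x powr a * norm (grad f x)) powr \<delta>
                * Lp_norm q (\<lambda>x. norm x powr b * f x) powr (1 - \<delta>))
       \<and> (real DIM('a) = p * (1 - a) \<longrightarrow>
           Lp_norm r (\<lambda>x. norm x powr c * f x)
             \<le> p powr \<delta>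
                * Lp_norm p (\<lambda>x. norm x powr a * ln (norm x) * norm (grad f x)) powr \<delta>
                * Lp_norm q (\<lambda>x. norm x powr b * f x) powr (1 - \<delta>))"
proof -
  obtain K where f: "C1c_punct K f" using C0_inf_punct_imp_C1c_punct[OF assms(11)] .
  have "Lp_norm r (\<lambda>x. norm x powr c * f x) \<le> Lp_norm p (\<lambda>x. norm x powr (a - 1) * f x) powr \<delta>
      * Lp_norm q (\<lambda>x. norm x powr b * f x) powr (1 - \<delta>)"
    by (rule weighted_Lp_interpolation[OF f]) (use assms in \<open>auto simp: algebra_simps\<close>)
  then show ?thesis
    using weighted_Hardy_inequality[OF f assms(1)] weighted_Hardy_inequality_log[OF f assms(1)] assms(1,5)
    by (auto intro!: le_trans_powr_mult simp: Lp_norm_nonneg)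
qed

end
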